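(* For any American option $\xi$, \[ \{x\in\mathbb{R}^d : \exists Y\in\Phi^{\mathrm{ag}}(\xi),\ x=Y_0\}=\{x\in\mathbb{R}^d:\exists y\in\Phi^{\mathrm{ad}}(\xi),\ x=y_0\}. \]
   Context: Finite filtered probability space $(\Omega,\mathcal{F},\mathbb{P};(\mathcal{F}_t)_{t=0}^T)$ with $\mathcal{F}_0$ trivial, $\mathcal{F}_T=2^\Omega$, $\mathbb{P}(\{\omega\})>0$. $\mathcal{L}_t$: $\mathcal{F}_t$-measurable $\mathbb{R}^d$-valued random variables. $d$ assets with $\mathcal{F}_t$-measurable exchange rates $\pi^{jk}_t>0$, $\pi^{jj}_t=1$. Solvency cone $\mathcal{K}_t$: the set of $x\in\mathcal{L}_t$ with $x(\omega)$ in the convex cone generated by $e^1,\ldots,e^d$ and $\pi^{jk}_t(\omega)e^j-e^k$ for every $\omega$. Deferred solvency cone $\mathcal{Q}_t$: the set of $z\in\mathcal{L}_t$ for which there exist $y_{t+1},\ldots,y_{T+1}$, $y_s\in\mathcal{L}_{s-1}$, $y_{T+1}=0$, with $z-y_{t+1}\in\mathcal{K}_t$ and $y_s-y_{s+1}\in\mathcal{K}_s$ for $s=t+1,\ldots,T$. A trading strategy is $y=(y_t)_{t=0}^{T+1}$ with $y_0\in\mathbb{R}^d$, $y_t\in\mathcal{L}_{t-1}$ for $t=1,\ldots,T$, $y_{T+1}=0$; $\Phi$ is the set of trading strategies. A mixed stopping time is an adapted $[0,1]$-valued process $\chi=(\chi_t)_{t=0}^T$ with $\sum_{t=0}^T\chi_t=1$;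 $\mathcal{X}$ is the set of them. $\mathcal{T}$ is the set of stopping times with values in $\{0,\ldots,T\}$. An American option is an adapted $\mathbb{R}^d$-valued process $\xi=(\xi_t)_{t=0}^T$. $\Phi^{\mathrm{ag}}(\xi)$ is the set of maps $Y:\mathcal{X}\to\Phi$, $\chi\mapsto Y^\chi$, such that (i) $Y^\chi_t-\chi_t\xi_t-Y^\chi_{t+1}\in\mathcal{K}_t$ for all $\chi\in\mathcal{X}$ and $t=0,\ldots,T$; (ii) for all $\chi,\chi'\in\mathcal{X}$, $t$ and $\omega$: if $\chi_s(\omega)=\chi'_s(\omega)$ for $s=0,\ldots,t-1$ then $Y^\chi_t(\omega)=Y^{\chi'}_t(\omega)$. In particular $Y^\chi_0$ does not depend on $\chi$; it is denoted $Y_0$. $\Phi^{\mathrm{ad}}(\xi)$ is the set of $y\in\Phi$ such that for all $\tau\in\mathcal{T}$: $y_t-y_{t+1}\in\mathcal{Q}_t$ for $t=0,\ldots,\tau-1$ and $y_\tau-\xi_\tau\in\mathcal{Q}_\tau$. Standing assumption: the model admits no arbitrage (no $y\in\Phi$ with $y_0=0$, $y_t-y_{t+1}\in\mathcal{K}_t$ for $t<T$, and $y_T-x\in\mathcal{K}_T$ for some nonzero componentwise non-negative $x\in\mathcal{L}_T$). *)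

theory Defs
  imports "HOL-Probability.Probability"
begin

text \<open>
Omega = UNIV of a finite type 'w; assets are indexed by a finite type 'd, so R^d = real^'d.
  Exchange rates pi t w j k (the rate pi^{jk}_t(w)).
\<close>

definition market_model ::
  "('w::finite \<Rightarrow> real) \<Rightarrow> (nat \<Rightarrow> 'w measure) \<Rightarrow> (nat \<Rightarrow> 'w \<Rightarrow> 'd::finite \<Rightarrow> 'd \<Rightarrow> real) \<Rightarrow> nat \<Rightarrow> bool"
  where
  "market_model P F \<pi> T \<longleftrightarrow>
     (\<forall>w. P w > 0) \<and> (\<Sum>w\<in>UNIV. P w) = 1 \<and>
     (\<forall>t\<le>T. space (F t) = UNIV) \<and>
     (\<forall>s t. s \<le> t \<and> t \<le> T \<longrightarrow> sets (F s) \<subseteq> sets (F t)) \<and>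
     sets (F 0) = {{}, UNIV} \<and> sets (F T) = Pow UNIV \<and>
     (\<forall>t\<le>T. \<forall>j k. (\<lambda>w. \<pi> t w j k) \<in> borel_measurable (F t)) \<and>
     (\<forall>t\<le>T. \<forall>w j k. \<pi> t w j k > 0) \<and>
     (\<forall>t\<le>T. \<forall>w j. \<pi> t w j j = 1)"

definition Lset :: "(nat \<Rightarrow> 'w measure) \<Rightarrow> nat \<Rightarrow> ('w \<Rightarrow> real^'d::finite) set" where
  "Lset F t = borel_measurable (F t)"

definition solv_cone :: "(nat \<Rightarrow> 'w \<Rightarrow> 'd::finite \<Rightarrow> 'd \<Rightarrow> real) \<Rightarrow> nat \<Rightarrow> 'w \<Rightarrow> (real^'d) set" where
  "solv_cone \<pi> t w = convex_cone hull
     ({axis j 1 | j. True} \<union> {\<pi> t w j k *\<^sub>R axis j 1 - axis k 1 | j k. True})"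

definition Kset :: "(nat \<Rightarrow> 'w measure) \<Rightarrow> (nat \<Rightarrow> 'w \<Rightarrow> 'd::finite \<Rightarrow> 'd \<Rightarrow> real) \<Rightarrow> nat \<Rightarrow> ('w \<Rightarrow> real^'d) set" where
  "Kset F \<pi> t = {x \<in> Lset F t. \<forall>w. x w \<in> solv_cone \<pi> t w}"

definition Qset :: "(nat \<Rightarrow> 'w measure) \<Rightarrow> (nat \<Rightarrow> 'w \<Rightarrow> 'd::finite \<Rightarrow> 'd \<Rightarrow> real) \<Rightarrow> nat \<Rightarrow> nat \<Rightarrow> ('w \<Rightarrow> real^'d) set" where
  "Qset F \<pi> T t = {z \<in> Lset F t. \<exists>y :: nat \<Rightarrow> 'w \<Rightarrow> real^'d.
      (\<forall>s. t + 1 \<le> s \<and> s \<le> T + 1 \<longrightarrow> y s \<in> Lset F (s - 1)) \<and>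
      y (T + 1) = (\<lambda>w. 0) \<and>
      (\<lambda>w. z w - y (t + 1) w) \<in> Kset F \<pi> t \<and>
      (\<forall>s. t + 1 \<le> s \<and> s \<le> T \<longrightarrow> (\<lambda>w. y s w - y (s + 1) w) \<in> Kset F \<pi> s)}"

text \<open>Trading strategies Phi: y_0 deterministic (a constant in R^d), y_t in L_{t-1} for t = 1..T,
  y_{T+1} = 0; the (meaningless) values at times > T+1 are normalised to 0.\<close>
definition strategies :: "(nat \<Rightarrow> 'w measure) \<Rightarrow> nat \<Rightarrow> (nat \<Rightarrow> 'w \<Rightarrow> real^'d::finite) set" where
  "strategies F T = {y. (\<exists>c. y 0 = (\<lambda>w. c)) \<and>
      (\<forall>t. 1 \<le> t \<and> t \<le> T \<longrightarrow> y t \<in> Lset F (t - 1)) \<and>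
      (\<forall>t. t \<ge> T + 1 \<longrightarrow> y t = (\<lambda>w. 0))}"

definition mixed_stopping_times :: "(nat \<Rightarrow> 'w measure) \<Rightarrow> nat \<Rightarrow> (nat \<Rightarrow> 'w \<Rightarrow> real) set" where
  "mixed_stopping_times F T = {ch.
      (\<forall>t\<le>T. ch t \<in> borel_measurable (F t)) \<and>
      (\<forall>t\<le>T. \<forall>w. 0 \<le> ch t w \<and> ch t w \<le> 1) \<and>
      (\<forall>w. (\<Sum>t\<le>T. ch t w) = 1) \<and>
      (\<forall>t>T. ch t = (\<lambda>w. 0))}"

definition stopping_times :: "(nat \<Rightarrow> 'w measure) \<Rightarrow> nat \<Rightarrow> ('w \<Rightarrow> nat) set" where
  "stopping_times F T = {\<tau>. (\<forall>w. \<tau> w \<le> T) \<and> (\<forall>t\<le>T. {w. \<tau> w = t} \<in> sets (F t))}"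

definition american_option :: "(nat \<Rightarrow> 'w measure) \<Rightarrow> nat \<Rightarrow> (nat \<Rightarrow> 'w \<Rightarrow> real^'d::finite) \<Rightarrow> bool" where
  "american_option F T \<xi> \<longleftrightarrow> (\<forall>t\<le>T. \<xi> t \<in> Lset F t)"

definition no_arbitrage :: "(nat \<Rightarrow> 'w measure) \<Rightarrow> (nat \<Rightarrow> 'w \<Rightarrow> 'd::finite \<Rightarrow> 'd \<Rightarrow> real) \<Rightarrow> nat \<Rightarrow> bool" where
  "no_arbitrage F \<pi> T \<longleftrightarrow> \<not> (\<exists>y \<in> strategies F T. \<exists>x \<in> Lset F T.
      y 0 = (\<lambda>w. 0) \<and>
      (\<forall>t<T. (\<lambda>w. y t w - y (t + 1) w) \<in> Kset F \<pi> t) \<and>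
      (\<lambda>w. y T w - x w) \<in> Kset F \<pi> T \<and>
      x \<noteq> (\<lambda>w. 0) \<and> (\<forall>w i. 0 \<le> x w $ i))"

definition Phi_ag :: "(nat \<Rightarrow> 'w measure) \<Rightarrow> (nat \<Rightarrow> 'w \<Rightarrow> 'd::finite \<Rightarrow> 'd \<Rightarrow> real) \<Rightarrow> nat \<Rightarrow>
    (nat \<Rightarrow> 'w \<Rightarrow> real^'d) \<Rightarrow> ((nat \<Rightarrow> 'w \<Rightarrow> real) \<Rightarrow> (nat \<Rightarrow> 'w \<Rightarrow> real^'d)) set" where
  "Phi_ag F \<pi> T \<xi> = {Y.
      (\<forall>ch \<in> mixed_stopping_times F T. Y ch \<in> strategies F T) \<and>
      (\<forall>ch \<in> mixed_stopping_times F T. \<forall>t\<le>T.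
          (\<lambda>w. Y ch t w - ch t w *\<^sub>R \<xi> t w - Y ch (t + 1) w) \<in> Kset F \<pi> t) \<and>
      (\<forall>ch \<in> mixed_stopping_times F T. \<forall>ch' \<in> mixed_stopping_times F T. \<forall>t\<le>T + 1. \<forall>w.
          (\<forall>s<t. ch s w = ch' s w) \<longrightarrow> Y ch t w = Y ch' t w)}"

text \<open>Phi^ad(xi). For a stopping time tau, "y_t - y_{t+1} in Q_t for t < tau" and
  "y_tau - xi_tau in Q_tau" are read on the events {t < tau}, {tau = t} (which lie in F_t).\<close>
definition Phi_ad :: "(nat \<Rightarrow> 'w measure) \<Rightarrow> (nat \<Rightarrow> 'w \<Rightarrow> 'd::finite \<Rightarrow> 'd \<Rightarrow> real) \<Rightarrow> nat \<Rightarrow>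
    (nat \<Rightarrow> 'w \<Rightarrow> real^'d) \<Rightarrow> (nat \<Rightarrow> 'w \<Rightarrow> real^'d) set" where
  "Phi_ad F \<pi> T \<xi> = {y \<in> strategies F T. \<forall>\<tau> \<in> stopping_times F T. \<forall>t\<le>T.
      (\<lambda>w. if t < \<tau> w then y t w - y (t + 1) w else 0) \<in> Qset F \<pi> T t \<and>
      (\<lambda>w. if \<tau> w = t then y t w - \<xi> t w else 0) \<in> Qset F \<pi> T t}"

end

theory Submission
  imports Defs
begin

text \<open>
  A membership z \<in> Q_t is witnessed by a solvent liquidation strategy u started at time t.
  Given Y \<in> Phi^ag, the strategy y = Y^\<chi> for \<chi> stopping at T only rebalances solvently before T,
  and since Y^\<chi> depends only on the past of \<chi>, at time t it can be continued as the strategy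
  for \<chi> stopping at t, which liquidates y_t - \<xi>_t; so y \<in> Phi^ad.
  Conversely, given y \<in> Phi^ad, choose liquidations U^s of y_s - \<xi>_s and V^s of y_s - y_{s+1}.
  Against a mixed stopping time \<chi>, the mass \<chi>_s exercised at s follows U^s afterwards, while
  the mass M_{s+1} = 1 - \<Sum>_{r\<le>s} \<chi>_r still unexercised after s moves on along y and liquidates
  the surplus y_s - y_{s+1} along V^s. The resulting Y^\<chi>_t is a nonnegative combination of these
  solvent pieces, so each of its rebalancings is solvent, and it depends on \<chi> only through \<chi>_s, s < t.
\<close>

lemma convex_cone_solv_cone: "convex_cone (solv_cone \<pi> t w)"
  unfolding solv_cone_def by (rule convex_cone_convex_cone_hull)

lemma solv_cone_sum:
  assumes "\<And>i. i \<in> S \<Longrightarrow> f i \<in> solv_cone \<pi> t w"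
  shows "(\<Sum>i\<in>S. f i) \<in> solv_cone \<pi> t w"
  using assms
  by (induction S rule: infinite_finite_induct)
    (auto intro: convex_cone_contains_0 convex_cone_add convex_cone_solv_cone)

lemma Kset_solv_cone: "f \<in> Kset F \<pi> t \<Longrightarrow> f w \<in> solv_cone \<pi> t w"
  unfolding Kset_def by blast

lemma Kset_zero: "(\<lambda>w. 0) \<in> Kset F \<pi> t"
  unfolding Kset_def Lset_def
  by (auto intro: convex_cone_contains_0 convex_cone_solv_cone)

definition deferred_liquidation ::
    "(nat \<Rightarrow> 'w measure) \<Rightarrow> (nat \<Rightarrow> 'w \<Rightarrow> 'd::finite \<Rightarrow> 'd \<Rightarrow> real) \<Rightarrow> nat \<Rightarrow> nat \<Rightarrow>
      ('w \<Rightarrow> real^'d) \<Rightarrow> (nat \<Rightarrow> 'w \<Rightarrow> real^'d) \<Rightarrow> bool" where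
  "deferred_liquidation F \<pi> T t z u \<longleftrightarrow>
     (\<forall>s. t + 1 \<le> s \<and> s \<le> T + 1 \<longrightarrow> u s \<in> Lset F (s - 1)) \<and> u (T + 1) = (\<lambda>w. 0) \<and>
     (\<lambda>w. z w - u (t + 1) w) \<in> Kset F \<pi> t \<and>
     (\<forall>s. t + 1 \<le> s \<and> s \<le> T \<longrightarrow> (\<lambda>w. u s w - u (s + 1) w) \<in> Kset F \<pi> s)"

lemma Qset_iff_deferred_liquidation:
  "z \<in> Qset F \<pi> T t \<longleftrightarrow> z \<in> Lset F t \<and> (\<exists>u. deferred_liquidation F \<pi> T t z u)"
  unfolding Qset_def deferred_liquidation_def by blast

lemma Kset_subset_Qset:
  assumes "f \<in> Kset F \<pi> t"
  shows "f \<in> Qset F \<pi> T t"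
proof -
  have "deferred_liquidation F \<pi> T t f (\<lambda>s w. 0)"
    using assms unfolding deferred_liquidation_def by (simp add: Kset_zero Lset_def)
  then show ?thesis
    using assms unfolding Qset_iff_deferred_liquidation Kset_def by blast
qed

definition stop_at :: "nat \<Rightarrow> nat \<Rightarrow> 'w \<Rightarrow> real" where
  "stop_at t s w = (if s = t then 1 else 0)"

lemma stop_at_mixed_stopping_time:
  assumes "t \<le> T"
  shows "stop_at t \<in> mixed_stopping_times F T"
  using assms unfolding mixed_stopping_times_def stop_at_def by auto

lemma Phi_ag_strategy:
  "Y \<in> Phi_ag F \<pi> T \<xi> \<Longrightarrow> ch \<in> mixed_stopping_times F T \<Longrightarrow> Y ch \<in> strategies F T"
  unfolding Phi_ag_def by blast

lemma Phi_ag_solvent: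
  "Y \<in> Phi_ag F \<pi> T \<xi> \<Longrightarrow> ch \<in> mixed_stopping_times F T \<Longrightarrow> t \<le> T \<Longrightarrow>
    (\<lambda>w. Y ch t w - ch t w *\<^sub>R \<xi> t w - Y ch (t + 1) w) \<in> Kset F \<pi> t"
  unfolding Phi_ag_def by blast

lemma Phi_ag_nonanticipative:
  "Y \<in> Phi_ag F \<pi> T \<xi> \<Longrightarrow> ch \<in> mixed_stopping_times F T \<Longrightarrow> ch' \<in> mixed_stopping_times F T \<Longrightarrow>
    t \<le> T + 1 \<Longrightarrow> (\<forall>s<t. ch s w = ch' s w) \<Longrightarrow> Y ch t w = Y ch' t w"
  unfolding Phi_ag_def by blast

definition remaining_mass :: "(nat \<Rightarrow> 'w \<Rightarrow> real) \<Rightarrow> nat \<Rightarrow> 'w \<Rightarrow> real" where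
  "remaining_mass ch t w = 1 - (\<Sum>s<t. ch s w)"

definition blended_strategy ::
    "(nat \<Rightarrow> 'w \<Rightarrow> 'v::real_vector) \<Rightarrow> (nat \<Rightarrow> nat \<Rightarrow> 'w \<Rightarrow> 'v) \<Rightarrow> (nat \<Rightarrow> nat \<Rightarrow> 'w \<Rightarrow> 'v) \<Rightarrow>
      (nat \<Rightarrow> 'w \<Rightarrow> real) \<Rightarrow> nat \<Rightarrow> 'w \<Rightarrow> 'v" where
  "blended_strategy y U V ch t w = remaining_mass ch t w *\<^sub>R y t w +
     (\<Sum>s<t. ch s w *\<^sub>R U s t w + remaining_mass ch (s + 1) w *\<^sub>R V s t w)"

lemma remaining_mass_Suc: "remaining_mass ch (Suc t) w = remaining_mass ch t w - ch t w"
  by (simp add: remaining_mass_def)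

lemma blended_strategy_0: "blended_strategy y U V ch 0 = y 0"
  by (simp add: blended_strategy_def remaining_mass_def fun_eq_iff)

lemma blended_strategy_step:
  "blended_strategy y U V ch t w - ch t w *\<^sub>R x - blended_strategy y U V ch (t + 1) w
   = ch t w *\<^sub>R (y t w - x - U t (t + 1) w)
     + remaining_mass ch (t + 1) w *\<^sub>R (y t w - y (t + 1) w - V t (t + 1) w)
     + (\<Sum>s<t. ch s w *\<^sub>R (U s t w - U s (t + 1) w)
              + remaining_mass ch (s + 1) w *\<^sub>R (V s t w - V s (t + 1) w))"
proof -
  have "(\<Sum>s<t. ch s w *\<^sub>R (U s t w - U s (t + 1) w)
              + remaining_mass ch (s + 1) w *\<^sub>R (V s t w - V s (t + 1) w))
    = (\<Sum>s<t. ch s w *\<^sub>R U s t w + remaining_mass ch (s + 1) w *\<^sub>R V s t w)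
      - (\<Sum>s<t. ch s w *\<^sub>R U s (t + 1) w + remaining_mass ch (s + 1) w *\<^sub>R V s (t + 1) w)"
    by (simp add: sum_subtractf[symmetric] scaleR_diff_right algebra_simps)
  then show ?thesis
    by (simp add: blended_strategy_def remaining_mass_Suc algebra_simps scaleR_diff_left scaleR_diff_right)
qed

lemma blended_strategy_cong:
  assumes "\<forall>s<t. ch s w = ch' s w"
  shows "blended_strategy y U V ch t w = blended_strategy y U V ch' t w"
proof -
  have "remaining_mass ch r w = remaining_mass ch' r w" if "r \<le> t" for r
    using assms that unfolding remaining_mass_def by (auto intro!: sum.cong)
  then show ?thesis
    using assms unfolding blended_strategy_def by (auto intro!: sum.cong)
qed

lemma remaining_mass_nonneg:
  assumes "ch \<in> mixed_stopping_times F T" "t \<le> T + 1"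
  shows "0 \<le> remaining_mass ch t w"
proof -
  have "(\<Sum>s<t. ch s w) \<le> (\<Sum>s<T + 1. ch s w)"
    using assms unfolding mixed_stopping_times_def by (intro sum_mono2) auto
  also have "\<dots> = 1"
    using assms unfolding mixed_stopping_times_def by (simp add: lessThan_Suc_atMost)
  finally show ?thesis
    unfolding remaining_mass_def by simp
qed

lemma remaining_mass_horizon:
  "ch \<in> mixed_stopping_times F T \<Longrightarrow> remaining_mass ch (T + 1) w = 0"
  unfolding mixed_stopping_times_def remaining_mass_def by (simp add: lessThan_Suc_atMost)

locale market_filtration =
  fixes F :: "nat \<Rightarrow> 'w measure" and T :: nat
  assumes space_F: "t \<le> T \<Longrightarrow> space (F t) = UNIV"
    and sets_F_mono: "s \<le> t \<Longrightarrow> t \<le> T \<Longrightarrow> sets (F s) \<subseteq> sets (F t)"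

lemma market_model_filtration:
  assumes "market_model P F \<pi> T"
  shows "market_filtration F T"
proof
  show "space (F t) = UNIV" if "t \<le> T" for t
    using assms that unfolding market_model_def by simp
  show "sets (F s) \<subseteq> sets (F t)" if "s \<le> t" "t \<le> T" for s t
    using assms that unfolding market_model_def by simp
qed

context market_filtration
begin

lemma measurable_F_mono:
  assumes "s \<le> t" "t \<le> T" "f \<in> borel_measurable (F s)"
  shows "f \<in> borel_measurable (F t)"
proof (rule measurable_from_subalg[OF _ assms(3)])
  show "subalgebra (F t) (F s)"
    unfolding subalgebra_def using space_F sets_F_mono assms(1,2) by auto
qed

lemma Kset_restrict:
  assumes "f \<in> Kset F \<pi> t" "t \<le> T" "A \<in> sets (F t)"
  shows "(\<lambda>w. if w \<in> A then f w else 0) \<in> Kset F \<pi> t"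
  using assms space_F unfolding Kset_def Lset_def
  by (auto intro!: measurable_If_set convex_cone_contains_0 convex_cone_solv_cone)

lemma deferred_liquidation_restrict:
  assumes u: "deferred_liquidation F \<pi> T t z u" and t: "t \<le> T" and A: "A \<in> sets (F t)"
  shows "deferred_liquidation F \<pi> T t (\<lambda>w. if w \<in> A then z w else 0)
           (\<lambda>s w. if w \<in> A then u s w else 0)"
proof -
  have A_later: "A \<in> sets (F s)" if "t \<le> s" "s \<le> T" for s
    using A sets_F_mono that by blast
  have restrict_diff: "(\<lambda>w. (if w \<in> A then f w else 0) - (if w \<in> A then g w else 0))
      = (\<lambda>w. if w \<in> A then f w - g w else 0)" for f g :: "'w \<Rightarrow> real^'d"
    by auto
  show ?thesis
    unfolding deferred_liquidation_def
  proof (intro conjI allI impI)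
    fix s assume s: "t + 1 \<le> s \<and> s \<le> T + 1"
    have "u s \<in> borel_measurable (F (s - 1))"
      using u s unfolding deferred_liquidation_def Lset_def by blast
    moreover have "A \<in> sets (F (s - 1))" "space (F (s - 1)) = UNIV"
      using A_later[of "s - 1"] space_F[of "s - 1"] s by auto
    ultimately show "(\<lambda>w. if w \<in> A then u s w else 0) \<in> Lset F (s - 1)"
      unfolding Lset_def by (auto intro!: measurable_If_set)
  next
    show "(\<lambda>w. if w \<in> A then u (T + 1) w else 0) = (\<lambda>w. 0)"
      using u unfolding deferred_liquidation_def by (simp add: fun_eq_iff)
  next
    show "(\<lambda>w. (if w \<in> A then z w else 0) - (if w \<in> A then u (t + 1) w else 0)) \<in> Kset F \<pi> t"
      using u unfolding deferred_liquidation_def restrict_diff by (intro Kset_restrict t A) blast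
  next
    fix s assume s: "t + 1 \<le> s \<and> s \<le> T"
    then show "(\<lambda>w. (if w \<in> A then u s w else 0) - (if w \<in> A then u (s + 1) w else 0)) \<in> Kset F \<pi> s"
      using u A_later[of s] unfolding deferred_liquidation_def restrict_diff
      by (intro Kset_restrict) simp_all
  qed
qed

lemma Qset_restrict:
  assumes z: "z \<in> Qset F \<pi> T t" and t: "t \<le> T" and A: "A \<in> sets (F t)"
  shows "(\<lambda>w. if w \<in> A then z w else 0) \<in> Qset F \<pi> T t"
proof -
  obtain u where "z \<in> Lset F t" and u: "deferred_liquidation F \<pi> T t z u"
    using z unfolding Qset_iff_deferred_liquidation by blast
  then have "(\<lambda>w. if w \<in> A then z w else 0) \<in> Lset F t"
    using A space_F[OF t] unfolding Lset_def by (auto intro!: measurable_If_set)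
  then show ?thesis
    using deferred_liquidation_restrict[OF u t A] unfolding Qset_iff_deferred_liquidation by blast
qed

lemma strategies_measurable:
  assumes y: "y \<in> strategies F T" and "s \<le> t + 1" "t \<le> T"
  shows "y s \<in> borel_measurable (F t)"
proof -
  consider "s = 0" | "1 \<le> s" "s \<le> T" | "s = T + 1"
    using assms by linarith
  then show ?thesis
  proof cases
    case 2
    then have "y s \<in> borel_measurable (F (s - 1))"
      using y unfolding strategies_def Lset_def by auto
    then show ?thesis
      using measurable_F_mono assms by (metis diff_le_mono le_diff_conv)
  qed (use y in \<open>auto simp: strategies_def\<close>)
qed

lemma stopping_time_later_event:
  assumes "\<tau> \<in> stopping_times F T" "t \<le> T"
  shows "{w. t < \<tau> w} \<in> sets (F t)"
proof -
  have "{w. t < \<tau> w} = space (F t) - (\<Union>s\<le>t. {w. \<tau> w = s})"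
    using space_F[OF assms(2)] by auto
  also have "\<dots> \<in> sets (F t)"
  proof (intro sets.Diff sets.top sets.finite_UN)
    fix s assume "s \<in> {..t}"
    then show "{w. \<tau> w = s} \<in> sets (F t)"
      using assms sets_F_mono[of s t] unfolding stopping_times_def by auto
  qed auto
  finally show ?thesis .
qed

lemma const_stopping_time:
  assumes "s \<le> T"
  shows "(\<lambda>w. s) \<in> stopping_times F T"
  using assms sets.top[of "F s"] space_F unfolding stopping_times_def by auto

lemma Phi_ag_exercise_Qset:
  assumes Y: "Y \<in> Phi_ag F \<pi> T \<xi>" and \<xi>: "american_option F T \<xi>" and t: "t \<le> T"
  shows "(\<lambda>w. Y (stop_at T) t w - \<xi> t w) \<in> Qset F \<pi> T t"
proof -
  define Z where "Z = Y (stop_at t)"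
  have Z: "Z \<in> strategies F T"
    unfolding Z_def using Y t by (intro Phi_ag_strategy stop_at_mixed_stopping_time)
  have Z_t: "Z t w = Y (stop_at T) t w" for w
    unfolding Z_def using Y t
    by (intro Phi_ag_nonanticipative stop_at_mixed_stopping_time) (auto simp: stop_at_def)
  have Z_solvent: "(\<lambda>w. Z s w - stop_at t s w *\<^sub>R \<xi> s w - Z (s + 1) w) \<in> Kset F \<pi> s" if "s \<le> T" for s
    unfolding Z_def using Y t that by (intro Phi_ag_solvent stop_at_mixed_stopping_time)
  have "deferred_liquidation F \<pi> T t (\<lambda>w. Y (stop_at T) t w - \<xi> t w) Z"
    unfolding deferred_liquidation_def
  proof (intro conjI allI impI)
    fix s assume "t + 1 \<le> s \<and> s \<le> T + 1"
    then show "Z s \<in> Lset F (s - 1)"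
      unfolding Lset_def by (intro strategies_measurable[OF Z]) auto
  next
    show "Z (T + 1) = (\<lambda>w. 0)"
      using Z unfolding strategies_def by auto
  next
    show "(\<lambda>w. Y (stop_at T) t w - \<xi> t w - Z (t + 1) w) \<in> Kset F \<pi> t"
      using Z_solvent[OF t] by (simp add: Z_t stop_at_def)
  next
    fix s assume "t + 1 \<le> s \<and> s \<le> T"
    then show "(\<lambda>w. Z s w - Z (s + 1) w) \<in> Kset F \<pi> s"
      using Z_solvent[of s] by (simp add: stop_at_def)
  qed
  moreover have "(\<lambda>w. Y (stop_at T) t w - \<xi> t w) \<in> Lset F t"
    using strategies_measurable[OF Phi_ag_strategy[OF Y stop_at_mixed_stopping_time] _ t, of T t] \<xi> t
    unfolding american_option_def Lset_def by (auto intro: borel_measurable_diff)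
  ultimately show ?thesis
    unfolding Qset_iff_deferred_liquidation by blast
qed

lemma Phi_ag_imp_Phi_ad:
  assumes Y: "Y \<in> Phi_ag F \<pi> T \<xi>" and \<xi>: "american_option F T \<xi>"
  shows "Y (stop_at T) \<in> Phi_ad F \<pi> T \<xi>"
  unfolding Phi_ad_def
proof (intro CollectI conjI ballI allI impI)
  let ?y = "Y (stop_at T)"
  show "?y \<in> strategies F T"
    by (rule Phi_ag_strategy[OF Y stop_at_mixed_stopping_time]) simp
  fix \<tau> t assume \<tau>: "\<tau> \<in> stopping_times F T" and t: "t \<le> T"
  have "(\<lambda>w. if t < \<tau> w then ?y t w - ?y (t + 1) w else 0)
      = (\<lambda>w. if w \<in> {w. t < \<tau> w} then ?y t w - stop_at T t w *\<^sub>R \<xi> t w - ?y (t + 1) w else 0)"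
  proof (rule ext)
    fix w
    have "\<tau> w \<le> T"
      using \<tau> unfolding stopping_times_def by blast
    then show "(if t < \<tau> w then ?y t w - ?y (t + 1) w else 0)
        = (if w \<in> {w. t < \<tau> w} then ?y t w - stop_at T t w *\<^sub>R \<xi> t w - ?y (t + 1) w else 0)"
      by (simp add: stop_at_def)
  qed
  also have "\<dots> \<in> Qset F \<pi> T t"
    using Y t \<tau> by (intro Qset_restrict Kset_subset_Qset Phi_ag_solvent stop_at_mixed_stopping_time
        stopping_time_later_event) auto
  finally show "(\<lambda>w. if t < \<tau> w then ?y t w - ?y (t + 1) w else 0) \<in> Qset F \<pi> T t" .
  have "{w. \<tau> w = t} \<in> sets (F t)"
    using \<tau> t unfolding stopping_times_def by blast
  from Qset_restrict[OF Phi_ag_exercise_Qset[OF Y \<xi> t] t this]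
  show "(\<lambda>w. if \<tau> w = t then ?y t w - \<xi> t w else 0) \<in> Qset F \<pi> T t"
    by simp
qed

lemma remaining_mass_measurable:
  assumes ch: "ch \<in> mixed_stopping_times F T" and "t \<le> k + 1" "k \<le> T"
  shows "remaining_mass ch t \<in> borel_measurable (F k)"
  unfolding remaining_mass_def
proof (intro borel_measurable_diff borel_measurable_const borel_measurable_sum)
  fix s assume "s \<in> {..<t}"
  then have "s \<le> k"
    using assms(2) by simp
  moreover have "ch s \<in> borel_measurable (F s)"
    using ch \<open>s \<le> k\<close> assms(3) unfolding mixed_stopping_times_def by simp
  ultimately show "ch s \<in> borel_measurable (F k)"
    using assms(3) measurable_F_mono by blast
qed

lemma Phi_ad_deferred_liquidations:
  assumes y: "y \<in> Phi_ad F \<pi> T \<xi>"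
  obtains U V where
    "\<And>s. s \<le> T \<Longrightarrow> deferred_liquidation F \<pi> T s (\<lambda>w. y s w - \<xi> s w) (U s)"
    "\<And>s. s < T \<Longrightarrow> deferred_liquidation F \<pi> T s (\<lambda>w. y s w - y (s + 1) w) (V s)"
proof -
  have "y \<in> strategies F T \<and> (\<forall>\<tau> \<in> stopping_times F T. \<forall>t\<le>T.
      (\<lambda>w. if t < \<tau> w then y t w - y (t + 1) w else 0) \<in> Qset F \<pi> T t \<and>
      (\<lambda>w. if \<tau> w = t then y t w - \<xi> t w else 0) \<in> Qset F \<pi> T t)"
    using y unfolding Phi_ad_def by (rule CollectD)
  then have continue: "(\<lambda>w. if t < \<tau> w then y t w - y (t + 1) w else 0) \<in> Qset F \<pi> T t"
    and exercise: "(\<lambda>w. if \<tau> w = t then y t w - \<xi> t w else 0) \<in> Qset F \<pi> T t"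
    if "\<tau> \<in> stopping_times F T" "t \<le> T" for \<tau> t
    using that by blast+
  have "(\<lambda>w. y s w - \<xi> s w) \<in> Qset F \<pi> T s" if "s \<le> T" for s
    using exercise[OF const_stopping_time[OF that] that] by simp
  then have "\<forall>s\<in>{..T}. \<exists>u. deferred_liquidation F \<pi> T s (\<lambda>w. y s w - \<xi> s w) u"
    unfolding Qset_iff_deferred_liquidation by simp
  then obtain U where U: "\<forall>s\<in>{..T}. deferred_liquidation F \<pi> T s (\<lambda>w. y s w - \<xi> s w) (U s)"
    by (rule bchoice[THEN exE])
  have "(\<lambda>w. y s w - y (s + 1) w) \<in> Qset F \<pi> T s" if "s < T" for s
    using continue[OF const_stopping_time[of T], of s] that by simp
  then have "\<forall>s\<in>{..<T}. \<exists>v. deferred_liquidation F \<pi> T s (\<lambda>w. y s w - y (s + 1) w) v"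
    unfolding Qset_iff_deferred_liquidation by simp
  then obtain V where V: "\<forall>s\<in>{..<T}. deferred_liquidation F \<pi> T s (\<lambda>w. y s w - y (s + 1) w) (V s)"
    by (rule bchoice[THEN exE])
  show ?thesis
    using U V by (intro that) auto
qed

context
  fixes \<pi> :: "nat \<Rightarrow> 'w \<Rightarrow> 'd::finite \<Rightarrow> 'd \<Rightarrow> real"
    and \<xi> y :: "nat \<Rightarrow> 'w \<Rightarrow> real^'d"
    and U V :: "nat \<Rightarrow> nat \<Rightarrow> 'w \<Rightarrow> real^'d"
  assumes y: "y \<in> strategies F T"
    and U: "\<And>s. s \<le> T \<Longrightarrow> deferred_liquidation F \<pi> T s (\<lambda>w. y s w - \<xi> s w) (U s)"
    and V: "\<And>s. s < T \<Longrightarrow> deferred_liquidation F \<pi> T s (\<lambda>w. y s w - y (s + 1) w) (V s)"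
begin

lemma blended_strategy_measurable:
  assumes ch: "ch \<in> mixed_stopping_times F T" and t: "1 \<le> t" "t \<le> T"
  shows "blended_strategy y U V ch t \<in> borel_measurable (F (t - 1))"
  unfolding blended_strategy_def
proof (intro borel_measurable_add borel_measurable_scaleR borel_measurable_sum)
  show "y t \<in> borel_measurable (F (t - 1))"
    using y t unfolding strategies_def Lset_def by blast
  show "remaining_mass ch t \<in> borel_measurable (F (t - 1))"
    using t by (intro remaining_mass_measurable[OF ch]) linarith+
  fix s assume "s \<in> {..<t}"
  then have s: "s < t" by simp
  show "remaining_mass ch (s + 1) \<in> borel_measurable (F (t - 1))"
    using s t by (intro remaining_mass_measurable[OF ch]) linarith+
  have "ch s \<in> borel_measurable (F s)"
    using ch s t unfolding mixed_stopping_times_def by simp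
  then show "ch s \<in> borel_measurable (F (t - 1))"
    by (rule measurable_F_mono[rotated 2]) (use s t in linarith)+
  show "U s t \<in> borel_measurable (F (t - 1))"
    using U[of s] s t unfolding deferred_liquidation_def Lset_def by simp
  show "V s t \<in> borel_measurable (F (t - 1))"
    using V[of s] s t unfolding deferred_liquidation_def Lset_def by simp
qed

lemma blended_strategy_horizon:
  assumes ch: "ch \<in> mixed_stopping_times F T"
  shows "blended_strategy y U V ch (T + 1) = (\<lambda>w. 0)"
proof
  fix w
  have "ch s w *\<^sub>R U s (T + 1) w + remaining_mass ch (s + 1) w *\<^sub>R V s (T + 1) w = 0" if "s \<le> T" for s
  proof -
    have "U s (T + 1) w = 0"
      using U[OF that] unfolding deferred_liquidation_def by simp
    moreover have "remaining_mass ch (s + 1) w *\<^sub>R V s (T + 1) w = 0"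
    proof (cases "s < T")
      case True
      then show ?thesis
        using V[OF True] unfolding deferred_liquidation_def by simp
    next
      case False
      then show ?thesis
        using that remaining_mass_horizon[OF ch] by simp
    qed
    ultimately show ?thesis
      by simp
  qed
  then show "blended_strategy y U V ch (T + 1) w = 0"
    unfolding blended_strategy_def using remaining_mass_horizon[OF ch] by simp
qed

lemma blended_strategy_solvent:
  assumes ch: "ch \<in> mixed_stopping_times F T" and t: "t \<le> T"
  shows "blended_strategy y U V ch t w - ch t w *\<^sub>R \<xi> t w - blended_strategy y U V ch (t + 1) w
           \<in> solv_cone \<pi> t w"
proof -
  have ch_nonneg: "0 \<le> ch s w" if "s \<le> T" for s
    using ch that unfolding mixed_stopping_times_def by simp
  have exercised: "ch t w *\<^sub>R (y t w - \<xi> t w - U t (t + 1) w) \<in> solv_cone \<pi> t w"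
    using U[OF t] ch_nonneg[OF t] unfolding deferred_liquidation_def
    by (intro convex_cone_scaleR convex_cone_solv_cone Kset_solv_cone[where F = F]) auto
  have continued: "remaining_mass ch (t + 1) w *\<^sub>R (y t w - y (t + 1) w - V t (t + 1) w) \<in> solv_cone \<pi> t w"
  proof (cases "t < T")
    case True
    then show ?thesis
      using V[OF True] remaining_mass_nonneg[OF ch, of "t + 1"] unfolding deferred_liquidation_def
      by (intro convex_cone_scaleR convex_cone_solv_cone Kset_solv_cone[where F = F]) auto
  next
    case False
    then show ?thesis
      using t remaining_mass_horizon[OF ch] convex_cone_contains_0[OF convex_cone_solv_cone] by simp
  qed
  have deferred: "(\<Sum>s<t. ch s w *\<^sub>R (U s t w - U s (t + 1) w)
      + remaining_mass ch (s + 1) w *\<^sub>R (V s t w - V s (t + 1) w)) \<in> solv_cone \<pi> t w"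
  proof (intro solv_cone_sum convex_cone_add convex_cone_scaleR convex_cone_solv_cone)
    fix s assume "s \<in> {..<t}"
    then have s: "s < t" by simp
    show "0 \<le> ch s w"
      using s t by (intro ch_nonneg) simp
    show "0 \<le> remaining_mass ch (s + 1) w"
      using s t by (intro remaining_mass_nonneg[OF ch]) simp
    show "U s t w - U s (t + 1) w \<in> solv_cone \<pi> t w"
      using U[of s] s t unfolding deferred_liquidation_def by (intro Kset_solv_cone[where F = F]) simp
    show "V s t w - V s (t + 1) w \<in> solv_cone \<pi> t w"
      using V[of s] s t unfolding deferred_liquidation_def by (intro Kset_solv_cone[where F = F]) simp
  qed
  show ?thesis
    unfolding blended_strategy_step
    by (intro convex_cone_add convex_cone_solv_cone exercised continued deferred)
qed

lemma blended_strategy_Phi_ag: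
  assumes \<xi>: "american_option F T \<xi>"
  shows "(\<lambda>ch t. if t \<le> T then blended_strategy y U V ch t else (\<lambda>w. 0)) \<in> Phi_ag F \<pi> T \<xi>"
    (is "?Y \<in> _")
proof -
  have strategy: "?Y ch \<in> strategies F T" if ch: "ch \<in> mixed_stopping_times F T" for ch
    unfolding strategies_def
  proof (intro CollectI conjI allI impI)
    obtain c where "y 0 = (\<lambda>w. c)"
      using y unfolding strategies_def by blast
    then show "\<exists>c. ?Y ch 0 = (\<lambda>w. c)"
      by (auto simp: blended_strategy_0)
  next
    fix t assume "1 \<le> t \<and> t \<le> T"
    then show "?Y ch t \<in> Lset F (t - 1)"
      using blended_strategy_measurable[OF ch] unfolding Lset_def by simp
  qed simp
  have solvent: "(\<lambda>w. ?Y ch t w - ch t w *\<^sub>R \<xi> t w - ?Y ch (t + 1) w) \<in> Kset F \<pi> t"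
    if ch: "ch \<in> mixed_stopping_times F T" and t: "t \<le> T" for ch t
    unfolding Kset_def Lset_def
  proof (intro CollectI conjI allI)
    have "ch t \<in> borel_measurable (F t)" "\<xi> t \<in> borel_measurable (F t)"
      using ch \<xi> t unfolding mixed_stopping_times_def american_option_def Lset_def by simp_all
    then show "(\<lambda>w. ?Y ch t w - ch t w *\<^sub>R \<xi> t w - ?Y ch (t + 1) w) \<in> borel_measurable (F t)"
      using strategies_measurable[OF strategy[OF ch] _ t, of t]
        strategies_measurable[OF strategy[OF ch] _ t, of "t + 1"]
      by (intro borel_measurable_diff borel_measurable_scaleR) auto
    fix w
    show "?Y ch t w - ch t w *\<^sub>R \<xi> t w - ?Y ch (t + 1) w \<in> solv_cone \<pi> t w"
      using blended_strategy_solvent[OF ch t, of w] blended_strategy_horizon[OF ch] t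
      by (cases "t = T") auto
  qed
  have nonanticipative: "?Y ch t w = ?Y ch' t w" if "\<forall>s<t. ch s w = ch' s w" for ch ch' t w
    using blended_strategy_cong[of t ch w ch' y U V, OF that] by simp
  show ?thesis
    unfolding Phi_ag_def using strategy solvent nonanticipative by blast
qed

end

lemma Phi_ad_imp_Phi_ag:
  assumes y: "y \<in> Phi_ad F \<pi> T \<xi>" and \<xi>: "american_option F T \<xi>"
  shows "\<exists>Y \<in> Phi_ag F \<pi> T \<xi>. \<forall>ch \<in> mixed_stopping_times F T. \<forall>w. Y ch 0 w = y 0 w"
proof -
  obtain U V where
    U: "\<And>s. s \<le> T \<Longrightarrow> deferred_liquidation F \<pi> T s (\<lambda>w. y s w - \<xi> s w) (U s)" and
    V: "\<And>s. s < T \<Longrightarrow> deferred_liquidation F \<pi> T s (\<lambda>w. y s w - y (s + 1) w) (V s)"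
    using Phi_ad_deferred_liquidations[OF y] by blast
  have "y \<in> strategies F T"
    using y unfolding Phi_ad_def by blast
  then have "(\<lambda>ch t. if t \<le> T then blended_strategy y U V ch t else (\<lambda>w. 0)) \<in> Phi_ag F \<pi> T \<xi>"
    using blended_strategy_Phi_ag U V \<xi> by blast
  then show ?thesis
    by (rule bexI[rotated]) (simp add: blended_strategy_0)
qed

end

theorem proposition4p4:
  fixes P :: "'w::finite \<Rightarrow> real"
    and F :: "nat \<Rightarrow> 'w measure"
    and \<pi> :: "nat \<Rightarrow> 'w \<Rightarrow> 'd::finite \<Rightarrow> 'd \<Rightarrow> real"
    and T :: nat
    and \<xi> :: "nat \<Rightarrow> 'w \<Rightarrow> real^'d"
  assumes "market_model P F \<pi> T"
    and "no_arbitrage F \<pi> T"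
    and "american_option F T \<xi>"
  shows "{x :: real^'d. \<exists>Y \<in> Phi_ag F \<pi> T \<xi>. \<forall>ch \<in> mixed_stopping_times F T. \<forall>w. Y ch 0 w = x}
       = {x :: real^'d. \<exists>y \<in> Phi_ad F \<pi> T \<xi>. \<forall>w. y 0 w = x}"
proof -
  interpret market_filtration F T
    using assms(1) by (rule market_model_filtration)
  show ?thesis
  proof (intro set_eqI iffI; unfold mem_Collect_eq)
    fix x
    assume "\<exists>Y \<in> Phi_ag F \<pi> T \<xi>. \<forall>ch \<in> mixed_stopping_times F T. \<forall>w. Y ch 0 w = x"
    then obtain Y where Y: "Y \<in> Phi_ag F \<pi> T \<xi>" and "\<forall>ch \<in> mixed_stopping_times F T. \<forall>w. Y ch 0 w = x"
      by blast
    then have "\<forall>w. Y (stop_at T) 0 w = x"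
      using stop_at_mixed_stopping_time[of T T] by blast
    then show "\<exists>y \<in> Phi_ad F \<pi> T \<xi>. \<forall>w. y 0 w = x"
      using Phi_ag_imp_Phi_ad[OF Y assms(3)] by blast
  next
    fix x
    assume "\<exists>y \<in> Phi_ad F \<pi> T \<xi>. \<forall>w. y 0 w = x"
    then show "\<exists>Y \<in> Phi_ag F \<pi> T \<xi>. \<forall>ch \<in> mixed_stopping_times F T. \<forall>w. Y ch 0 w = x"
      using Phi_ad_imp_Phi_ag[OF _ assms(3)] by metis
  qed
qed

end
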